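(* Let $\Sigma=(B,\sigma)$ be a signed graph whose underlying graph $B$ is a block that is neither a single edge nor a circle, and suppose $[e,C,+]$ is a positive battery. Then every bridge $D$ of $C$ is balanced (contains no negative circle).
   Context: A signed graph $\Sigma=(G,\sigma)$ is a finite graph $G$ with signature $\sigma:E(G)\to\{+,-\}$. A circle is a connected 2-regular subgraph; its sign is the product of its edge signs. A subgraph is balanced if all its circles are positive. A block is a maximal subgraph without a cutpoint. For a circle $C$, a chord is an edge not in $C$ joining two distinct vertices of $C$; a bridge of $C$ is either a chord or a connected component $D$ of $G\setminus V(C)$ together with all edges joining $D$ to $C$. $[e,C,+]$ means $C$ is a positive circle containing $e$ and is the only positive circle containing $e$. *)

theory Defs
  imports Main
begin

text \<open>Finite (multi)graphs: vertex set V, edge set E, and an incidence map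
  ends assigning to each edge its set of one (loop) or two endpoints.\<close>

datatype sgn = Plus | Minus

definition graph :: "'v set \<Rightarrow> 'e set \<Rightarrow> ('e \<Rightarrow> 'v set) \<Rightarrow> bool" where
  "graph V E ends \<longleftrightarrow> finite V \<and> finite E \<and>
     (\<forall>e\<in>E. ends e \<subseteq> V \<and> (card (ends e) = 1 \<or> card (ends e) = 2))"

definition verts :: "('e \<Rightarrow> 'v set) \<Rightarrow> 'e set \<Rightarrow> 'v set" where
  "verts ends F = (\<Union>f\<in>F. ends f)"

definition adj :: "('e \<Rightarrow> 'v set) \<Rightarrow> 'e set \<Rightarrow> ('v \<times> 'v) set" where
  "adj ends F = {(u, w). \<exists>f\<in>F. u \<in> ends f \<and> w \<in> ends f}"

definition deg :: "('e \<Rightarrow> 'v set) \<Rightarrow> 'e set \<Rightarrow> 'v \<Rightarrow> nat" where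
  "deg ends F v = card {f\<in>F. v \<in> ends f \<and> card (ends f) = 2}
                 + 2 * card {f\<in>F. ends f = {v}}"

definition connected_on :: "('e \<Rightarrow> 'v set) \<Rightarrow> 'v set \<Rightarrow> 'e set \<Rightarrow> bool" where
  "connected_on ends W F \<longleftrightarrow> W \<noteq> {} \<and> (\<forall>u\<in>W. \<forall>w\<in>W. (u, w) \<in> (adj ends F)\<^sup>*)"

definition circle :: "'e set \<Rightarrow> ('e \<Rightarrow> 'v set) \<Rightarrow> 'e set \<Rightarrow> bool" where
  "circle E ends F \<longleftrightarrow> F \<subseteq> E \<and> F \<noteq> {} \<and> connected_on ends (verts ends F) F \<and>
     (\<forall>v\<in>verts ends F. deg ends F v = 2)"

text \<open>Sign of an edge set: product of the edge signs.\<close>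
definition positive :: "('e \<Rightarrow> sgn) \<Rightarrow> 'e set \<Rightarrow> bool" where
  "positive \<sigma> F \<longleftrightarrow> even (card {f\<in>F. \<sigma> f = Minus})"

definition balanced :: "'e set \<Rightarrow> ('e \<Rightarrow> 'v set) \<Rightarrow> ('e \<Rightarrow> sgn) \<Rightarrow> 'e set \<Rightarrow> bool" where
  "balanced E ends \<sigma> F \<longleftrightarrow> (\<forall>C. circle E ends C \<and> C \<subseteq> F \<longrightarrow> positive \<sigma> C)"

definition cutpoint :: "'e set \<Rightarrow> ('e \<Rightarrow> 'v set) \<Rightarrow> 'v \<Rightarrow> bool" where
  "cutpoint E ends v \<longleftrightarrow> (\<exists>E1 E2. E1 \<union> E2 = E \<and> E1 \<inter> E2 = {} \<and> E1 \<noteq> {} \<and> E2 \<noteq> {}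
      \<and> verts ends E1 \<inter> verts ends E2 = {v})"

definition is_block :: "'v set \<Rightarrow> 'e set \<Rightarrow> ('e \<Rightarrow> 'v set) \<Rightarrow> bool" where
  "is_block V E ends \<longleftrightarrow> connected_on ends V E \<and> (\<nexists>v. cutpoint E ends v)"

definition pos_battery :: "'e set \<Rightarrow> ('e \<Rightarrow> 'v set) \<Rightarrow> ('e \<Rightarrow> sgn) \<Rightarrow> 'e \<Rightarrow> 'e set \<Rightarrow> bool" where
  "pos_battery E ends \<sigma> e C \<longleftrightarrow> circle E ends C \<and> e \<in> C \<and> positive \<sigma> C \<and>
     (\<forall>C'. circle E ends C' \<and> e \<in> C' \<and> positive \<sigma> C' \<longrightarrow> C' = C)"

definition chord :: "'e set \<Rightarrow> ('e \<Rightarrow> 'v set) \<Rightarrow> 'e set \<Rightarrow> 'e \<Rightarrow> bool" where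
  "chord E ends C f \<longleftrightarrow> f \<in> E \<and> f \<notin> C \<and> card (ends f) = 2 \<and> ends f \<subseteq> verts ends C"

definition comps_minus :: "'v set \<Rightarrow> 'e set \<Rightarrow> ('e \<Rightarrow> 'v set) \<Rightarrow> 'e set \<Rightarrow> 'v set set" where
  "comps_minus V E ends C =
     (let X = V - verts ends C; FX = {f\<in>E. ends f \<subseteq> X}
      in {{y\<in>X. (x, y) \<in> (adj ends FX)\<^sup>*} | x. x \<in> X})"

definition bridge_of_comp :: "'e set \<Rightarrow> ('e \<Rightarrow> 'v set) \<Rightarrow> 'e set \<Rightarrow> 'v set \<Rightarrow> 'e set" where
  "bridge_of_comp E ends C D =
     {f\<in>E. ends f \<subseteq> D} \<union> {f\<in>E. ends f \<inter> D \<noteq> {} \<and> ends f \<inter> verts ends C \<noteq> {}}"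

definition bridges :: "'v set \<Rightarrow> 'e set \<Rightarrow> ('e \<Rightarrow> 'v set) \<Rightarrow> 'e set \<Rightarrow> 'e set set" where
  "bridges V E ends C =
     {{f} | f. chord E ends C f} \<union> (bridge_of_comp E ends C ` comps_minus V E ends C)"

end

theory Submission
  imports Defs
begin

text \<open>A loop, together with any other edge, would make its vertex a cutpoint; so the block is
  loopless, and in it any two edges lie on a common circle. If N is a negative circle inside a
  bridge of C, then N is disjoint from C. Starting from a circle through e that meets N and
  repeatedly extracting circles through e from even subgraphs, one writes N as the symmetric
  difference of two circles through e. As N is negative, one of them is positive, so it is C by
  the battery property; but then C lies in both circles since N misses C, the two circles
  coincide and N would be empty.\<close>

lemma connected_edge_partition_common_vertex:
  assumes conn: "connected_on ends V E" and vE: "verts ends E \<subseteq> V"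
    and ne: "\<forall>f\<in>E. ends f \<noteq> {}"
    and un: "E1 \<union> E2 = E" and n1: "E1 \<noteq> {}" and n2: "E2 \<noteq> {}"
  shows "verts ends E1 \<inter> verts ends E2 \<noteq> {}"
proof -
  obtain f1 u where f1: "f1 \<in> E1" "u \<in> ends f1" using n1 ne un by blast
  obtain f2 w where f2: "f2 \<in> E2" "w \<in> ends f2" using n2 ne un by blast
  have "u \<in> V" "w \<in> V" using f1 f2 un vE unfolding verts_def by blast+
  then have "(u, w) \<in> (adj ends E)\<^sup>*" using conn unfolding connected_on_def by blast
  then have "w \<in> verts ends E1 \<or> verts ends E1 \<inter> verts ends E2 \<noteq> {}"
  proof (induction rule: rtrancl_induct)
    case base
    then show ?case using f1 unfolding verts_def by blast
  next
    case (step y z)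
    then obtain f where "f \<in> E" "y \<in> ends f" "z \<in> ends f" unfolding adj_def by blast
    then show ?case using step.IH un unfolding verts_def by blast
  qed
  moreover have "w \<in> verts ends E2" using f2 unfolding verts_def by blast
  ultimately show ?thesis by blast
qed

lemma even_card_sym_diff_iff:
  assumes "finite A" "finite B"
  shows "even (card {f\<in>sym_diff A B. P f}) \<longleftrightarrow>
    (even (card {f\<in>A. P f}) \<longleftrightarrow> even (card {f\<in>B. P f}))"
proof -
  let ?A = "{f\<in>A. P f}" and ?B = "{f\<in>B. P f}"
  have fin: "finite ?A" "finite ?B" using assms by auto
  have "{f\<in>sym_diff A B. P f} = (?A - ?B) \<union> (?B - ?A)" by blast
  moreover have "card ((?A - ?B) \<union> (?B - ?A)) = card (?A - ?B) + card (?B - ?A)"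
    using fin by (intro card_Un_disjoint) auto
  moreover have "card ?A = card (?A - ?B) + card (?A \<inter> ?B)"
    using fin card_Int_Diff[of ?A ?B] by (simp add: Int_commute)
  moreover have "card ?B = card (?B - ?A) + card (?A \<inter> ?B)"
    using fin card_Int_Diff[of ?B ?A] by (simp add: Int_commute)
  ultimately show ?thesis by presburger
qed

lemma positive_sym_diff_iff:
  "finite A \<Longrightarrow> finite B \<Longrightarrow>
    positive \<sigma> (sym_diff A B) \<longleftrightarrow> (positive \<sigma> A \<longleftrightarrow> positive \<sigma> B)"
  unfolding positive_def by (rule even_card_sym_diff_iff)

lemma Suc_mod_less: "i < n \<Longrightarrow> Suc i mod n = (if Suc i < n then Suc i else 0)"
  by (simp add: mod_Suc)

lemma block_loopless:
  assumes G: "graph V E ends" and B: "is_block V E ends" and E1: "card E \<noteq> 1" and f: "f \<in> E"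
  shows "card (ends f) = 2"
proof (rule ccontr)
  assume "card (ends f) \<noteq> 2"
  then have "card (ends f) = 1" using G f unfolding graph_def by auto
  then obtain v where v: "ends f = {v}" by (rule card_1_singletonE)
  have rest: "E - {f} \<noteq> {}"
  proof
    assume "E - {f} = {}"
    then have "E = {f}" using f by auto
    then show False using E1 by simp
  qed
  have un: "{f} \<union> (E - {f}) = E" using f by auto
  have "verts ends {f} \<inter> verts ends (E - {f}) \<noteq> {}"
  proof (rule connected_edge_partition_common_vertex[OF _ _ _ un])
    show "connected_on ends V E" using B unfolding is_block_def by simp
    show "verts ends E \<subseteq> V" "\<forall>f\<in>E. ends f \<noteq> {}"
      using G unfolding graph_def verts_def by fastforce+
  qed (use rest in auto)
  moreover have "verts ends {f} = {v}" using v unfolding verts_def by simp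
  ultimately have "cutpoint E ends v" unfolding cutpoint_def using rest un
    by (intro exI[of _ "{f}"] exI[of _ "E - {f}"]) auto
  then show False using B unfolding is_block_def by blast
qed

text \<open>p separates the edges meeting the part of G - V(F) reachable from x0 from all other edges.\<close>
lemma cutpoint_if_no_return:
  assumes FE: "F \<subseteq> E" and Fne: "F \<noteq> {}" and f0: "f0 \<in> E - F" "ends f0 = {p, x0}"
    and p: "p \<in> verts ends F" and x0: "x0 \<notin> verts ends F"
    and no_return: "\<And>q. (x0, q) \<in> {(x, y). (x, y) \<in> adj ends (E - F) \<and> x \<notin> verts ends F}\<^sup>*
       \<Longrightarrow> q \<in> verts ends F \<Longrightarrow> q = p"
  shows "cutpoint E ends p"
proof -
  define U where "U = verts ends F"
  define R where "R = {(x, y). (x, y) \<in> adj ends (E - F) \<and> x \<notin> U}"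
  define Y where "Y = {x. (x0, x) \<in> R\<^sup>* \<and> x \<notin> U}"
  define E1 where "E1 = {g\<in>E. ends g \<inter> Y \<noteq> {}}"
  define E2 where "E2 = E - E1"
  have f0E1: "f0 \<in> E1" using f0 x0 unfolding E1_def Y_def U_def by auto
  have FE2: "F \<subseteq> E2" using FE unfolding E1_def E2_def Y_def U_def verts_def by blast
  have "verts ends E1 \<inter> verts ends E2 \<subseteq> {p}"
  proof
    fix v assume "v \<in> verts ends E1 \<inter> verts ends E2"
    then obtain g g2 where g: "g \<in> E1" "v \<in> ends g" and g2: "g2 \<in> E2" "v \<in> ends g2"
      unfolding verts_def by auto
    have vY: "v \<notin> Y" using g2 unfolding E1_def E2_def by auto
    obtain x where x: "x \<in> ends g" "x \<in> Y" using g unfolding E1_def by auto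
    have "g \<notin> F" using FE2 g unfolding E2_def by auto
    then have xv: "(x, v) \<in> R"
      using x g unfolding R_def Y_def adj_def E1_def by auto
    have "(x0, x) \<in> R\<^sup>*" using x(2) unfolding Y_def by simp
    then have r: "(x0, v) \<in> R\<^sup>*" using xv by (rule rtrancl.rtrancl_into_rtrancl)
    then have "v \<in> U" using vY unfolding Y_def by auto
    then show "v \<in> {p}" using no_return r unfolding R_def U_def by auto
  qed
  moreover have "p \<in> verts ends E1" "p \<in> verts ends E2"
    using f0E1 f0(2) p FE2 unfolding verts_def by auto
  moreover have "E1 \<union> E2 = E" "E1 \<inter> E2 = {}" "E1 \<noteq> {}" "E2 \<noteq> {}"
    using f0E1 FE2 Fne unfolding E1_def E2_def by auto
  ultimately show ?thesis unfolding cutpoint_def by blast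
qed

locale loopless_graph =
  fixes E :: "'e set" and ends :: "'e \<Rightarrow> 'v set"
  assumes finite_edges: "finite E" and card_ends: "\<And>f. f \<in> E \<Longrightarrow> card (ends f) = 2"
begin

definition degree :: "'e set \<Rightarrow> 'v \<Rightarrow> nat" where
  "degree F v = card {f\<in>F. v \<in> ends f}"

definition even_subgraph :: "'e set \<Rightarrow> bool" where
  "even_subgraph F \<longleftrightarrow> (\<forall>v. even (degree F v))"

definition path :: "'e set \<Rightarrow> 'v list \<Rightarrow> 'e list \<Rightarrow> bool" where
  "path F vs es \<longleftrightarrow> distinct vs \<and> length vs = Suc (length es) \<and>
     (\<forall>i<length es. es!i \<in> F \<and> ends (es!i) = {vs!i, vs!Suc i})"

lemma ends_eq_pair: "f \<in> E \<Longrightarrow> x \<in> ends f \<Longrightarrow> \<exists>y. y \<noteq> x \<and> ends f = {x, y}"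
  using card_ends[of f] by (auto simp: card_2_iff)

lemma ends_nonempty: "f \<in> E \<Longrightarrow> ends f \<noteq> {}"
  using card_ends[of f] by auto

lemma deg_eq_degree: "F \<subseteq> E \<Longrightarrow> deg ends F v = degree F v"
proof -
  assume F: "F \<subseteq> E"
  then have "card {f\<in>F. ends f = {v}} = 0" using card_ends by (fastforce simp: card_eq_0_iff)
  moreover have "{f\<in>F. v \<in> ends f \<and> card (ends f) = 2} = {f\<in>F. v \<in> ends f}"
    using F card_ends by blast
  ultimately show ?thesis unfolding deg_def degree_def by simp
qed

lemma finite_ends: "f \<in> E \<Longrightarrow> finite (ends f)"
  using card_ends[of f] by (simp add: card_ge_0_finite)

lemma finite_verts: "F \<subseteq> E \<Longrightarrow> finite (verts ends F)"
  unfolding verts_def using finite_edges finite_ends by (auto intro: finite_subset)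

lemma circle_finite: "circle E ends K \<Longrightarrow> finite K"
  unfolding circle_def using finite_edges by (auto intro: finite_subset)

lemma circle_degree: "circle E ends K \<Longrightarrow> v \<in> verts ends K \<Longrightarrow> degree K v = 2"
  using deg_eq_degree unfolding circle_def by auto

lemma circle_even_subgraph: "circle E ends K \<Longrightarrow> even_subgraph K"
  unfolding even_subgraph_def
proof
  fix v assume K: "circle E ends K"
  show "even (degree K v)"
  proof (cases "v \<in> verts ends K")
    case True
    then show ?thesis using circle_degree[OF K] by simp
  next
    case False
    then have "{f\<in>K. v \<in> ends f} = {}" unfolding verts_def by auto
    then show ?thesis unfolding degree_def by (metis card.empty even_zero)
  qed
qed

lemma even_subgraph_sym_diff:
  assumes "finite A" "finite B" "even_subgraph A" "even_subgraph B"
  shows "even_subgraph (sym_diff A B)"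
  unfolding even_subgraph_def
proof
  fix v
  show "even (degree (sym_diff A B) v)"
    using assms even_card_sym_diff_iff[OF assms(1,2), of "\<lambda>f. v \<in> ends f"]
    unfolding even_subgraph_def degree_def by simp
qed

lemma path_length: "path F vs es \<Longrightarrow> length vs = Suc (length es)"
  unfolding path_def by simp

lemma path_distinct: "path F vs es \<Longrightarrow> distinct vs"
  unfolding path_def by simp

lemma path_nth_edge: "path F vs es \<Longrightarrow> i < length es \<Longrightarrow> es!i \<in> F \<and> ends (es!i) = {vs!i, vs!Suc i}"
  unfolding path_def by simp

lemma path_edges: "path F vs es \<Longrightarrow> set es \<subseteq> F"
  by (auto simp: in_set_conv_nth dest: path_nth_edge)

lemma path_singleton: "path F [v] []"
  unfolding path_def by simp

lemma path_Cons:
  assumes "path F vs es" "f \<in> F" "ends f = {w, hd vs}" "w \<notin> set vs"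
  shows "path F (w#vs) (f#es)"
proof -
  have "vs \<noteq> []" using path_length[OF assms(1)] by auto
  then have "(f#es)!i \<in> F \<and> ends ((f#es)!i) = {(w#vs)!i, (w#vs)!Suc i}" if "i < length (f#es)" for i
    using that assms path_nth_edge[OF assms(1), of "i - 1"] by (cases i) (auto simp: hd_conv_nth)
  then show ?thesis using assms path_length[OF assms(1)] unfolding path_def by simp
qed

lemma path_drop:
  assumes "path F vs es" "j < length vs"
  shows "path F (drop j vs) (drop j es)"
  using assms path_nth_edge[OF assms(1), of "j + _"] unfolding path_def by auto

lemma path_take:
  assumes "path F vs es" "j < length vs"
  shows "path F (take (Suc j) vs) (take j es)"
  using assms path_nth_edge[OF assms(1)] unfolding path_def by auto

lemma path_distinct_edges:
  assumes p: "path F vs es"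
  shows "distinct es"
  unfolding distinct_conv_nth
proof (intro allI impI notI)
  fix i k assume ik: "i < length es" "k < length es" "i \<noteq> k" and eq: "es!i = es!k"
  have L: "length vs = Suc (length es)" and d: "distinct vs"
    using path_length[OF p] path_distinct[OF p] by auto
  have "vs!i \<in> ends (es!k)" using eq path_nth_edge[OF p ik(1)] by simp
  then have "vs!i = vs!k \<or> vs!i = vs!Suc k" using path_nth_edge[OF p ik(2)] by simp
  then have "i = Suc k" using d ik L by (auto simp: nth_eq_iff_index_eq)
  have "vs!k \<in> ends (es!i)" using eq path_nth_edge[OF p ik(2)] by simp
  then have "vs!k = vs!i \<or> vs!k = vs!Suc i" using path_nth_edge[OF p ik(1)] by simp
  then have "k = Suc i" using d ik L by (auto simp: nth_eq_iff_index_eq)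
  with \<open>i = Suc k\<close> show False by simp
qed

lemma path_verts:
  assumes p: "path F vs es" and ne: "es \<noteq> []"
  shows "set vs \<subseteq> verts ends F"
proof
  fix x assume "x \<in> set vs"
  then obtain i where i: "i < length vs" "x = vs!i" by (auto simp: in_set_conv_nth)
  have L: "length vs = Suc (length es)" using path_length[OF p] .
  show "x \<in> verts ends F"
  proof (cases "i < length es")
    case True
    then show ?thesis using path_nth_edge[OF p True] i unfolding verts_def by auto
  next
    case False
    obtain k where k: "length es = Suc k" using ne by (cases es) auto
    then have "i = Suc k" using False i L by simp
    then show ?thesis using path_nth_edge[OF p, of k] i k unfolding verts_def by force
  qed
qed

lemma path_hd: "path F vs es \<Longrightarrow> hd vs = vs!0"
  using path_length by (metis hd_conv_nth list.size(3) nat.distinct(1))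

lemma path_last: "path F vs es \<Longrightarrow> last vs = vs!(length es)"
  using path_length by (metis diff_Suc_1 last_conv_nth list.size(3) nat.distinct(1))

definition cycle :: "'v list \<Rightarrow> 'e list \<Rightarrow> bool" where
  "cycle vs es \<longleftrightarrow> distinct vs \<and> distinct es \<and> length vs = length es \<and> 2 \<le> length es \<and>
     set es \<subseteq> E \<and> (\<forall>i<length es. ends (es!i) = {vs!i, vs!(Suc i mod length es)})"

lemma cycle_verts:
  assumes "cycle vs es"
  shows "verts ends (set es) = set vs"
proof -
  have len: "length vs = length es" and n2: "2 \<le> length es"
    and ed: "\<And>i. i < length es \<Longrightarrow> ends (es!i) = {vs!i, vs!(Suc i mod length es)}"
    using assms unfolding cycle_def by auto
  have "x \<in> set vs" if "i < length es" "x \<in> ends (es!i)" for i x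
  proof -
    have "Suc i mod length es < length es" using n2 by (intro mod_less_divisor) linarith
    then show ?thesis using that ed[of i] len by (auto simp del: mod_less_divisor)
  qed
  moreover have "vs!i \<in> ends (es!i)" if "i < length es" for i
    using ed[OF that] by simp
  ultimately show ?thesis
    unfolding verts_def using len by (force simp: in_set_conv_nth)
qed

lemma cycle_degree:
  assumes "cycle vs es" and v: "v \<in> set vs"
  shows "degree (set es) v = 2"
proof -
  define n where "n = length es"
  define nx where "nx i = Suc i mod n" for i
  have dv: "distinct vs" and de: "distinct es" and lv: "length vs = n" and n2: "2 \<le> n"
    and ed: "\<And>i. i < n \<Longrightarrow> ends (es!i) = {vs!i, vs!nx i}"
    using assms unfolding cycle_def n_def nx_def by auto
  have nxlt: "nx i < n" for i using n2 by (simp add: nx_def)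
  obtain j where j: "j < n" "v = vs!j" using v lv by (auto simp: in_set_conv_nth)
  define pj where "pj = (if j = 0 then n - 1 else j - 1)"
  have "i < n \<Longrightarrow> vs!j \<in> ends (es!i) \<longleftrightarrow> i = j \<or> nx i = j" for i
    using ed nxlt j dv lv by (auto simp: nth_eq_iff_index_eq)
  then have idx: "{i. i < n \<and> vs!j \<in> ends (es!i)} = {j, pj}"
    using j n2 unfolding pj_def nx_def by (auto simp: Suc_mod_less split: if_splits)
  have "{f\<in>set es. vs!j \<in> ends f} = (\<lambda>i. es!i) ` {i. i < n \<and> vs!j \<in> ends (es!i)}"
    by (auto simp: in_set_conv_nth n_def)
  then have "degree (set es) v = card ((\<lambda>i. es!i) ` {j, pj})"
    unfolding degree_def j(2) idx by simp
  also have "\<dots> = card {j, pj}"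
    using de j n2 by (intro card_image inj_on_nth) (auto simp: pj_def n_def)
  also have "\<dots> = 2" using n2 j by (auto simp: pj_def)
  finally show ?thesis .
qed

lemma cycle_connected:
  assumes "cycle vs es"
  shows "connected_on ends (set vs) (set es)"
proof -
  define n where "n = length es"
  have lv: "length vs = n" and n2: "2 \<le> n"
    and ed: "\<And>i. i < n \<Longrightarrow> ends (es!i) = {vs!i, vs!(Suc i mod n)}"
    using assms unfolding cycle_def n_def by auto
  have from0: "(vs!0, vs!i) \<in> (adj ends (set es))\<^sup>*" if "i < n" for i
    using that
  proof (induction i)
    case (Suc i)
    then have "(vs!i, vs!Suc i) \<in> adj ends (set es)"
      using ed[of i] unfolding adj_def n_def by (force simp: Suc_mod_less)
    then show ?case using Suc by (meson Suc_lessD rtrancl.rtrancl_into_rtrancl)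
  qed simp
  have "sym (adj ends (set es))" unfolding adj_def sym_def by blast
  then have "(vs!i, vs!k) \<in> (adj ends (set es))\<^sup>*" if "i < n" "k < n" for i k
    using from0[OF that(1)] from0[OF that(2)] by (meson rtrancl_trans symD sym_rtrancl)
  then show ?thesis
    unfolding connected_on_def using lv n2 by (auto simp: in_set_conv_nth)
qed

lemma circle_of_cycle:
  assumes "cycle vs es"
  shows "circle E ends (set es)"
proof -
  have "set es \<subseteq> E" "2 \<le> length es" using assms unfolding cycle_def by auto
  then show ?thesis
    unfolding circle_def cycle_verts[OF assms]
    using cycle_degree[OF assms] cycle_connected[OF assms] deg_eq_degree by auto
qed

lemma ends_of_two_paths:
  assumes p1: "path F1 vs1 es1" and p2: "path F2 vs2 es2"
    and n1: "es1 \<noteq> []" and n2: "es2 \<noteq> []" and l1: "last vs1 = hd vs2" and l2: "last vs2 = hd vs1"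
    and i: "i < length (es1 @ es2)"
  shows "ends ((es1 @ es2)!i) =
    {(butlast vs1 @ butlast vs2)!i, (butlast vs1 @ butlast vs2)!(Suc i mod length (es1 @ es2))}"
proof -
  define k1 where "k1 = length es1"
  define k2 where "k2 = length es2"
  define vs where "vs = butlast vs1 @ butlast vs2"
  define es where "es = es1 @ es2"
  have L1: "length vs1 = Suc k1" and L2: "length vs2 = Suc k2"
    using path_length[OF p1] path_length[OF p2] k1_def k2_def by simp_all
  have k1p: "k1 > 0" and k2p: "k2 > 0" using n1 n2 k1_def k2_def by simp_all
  have len: "length es = k1 + k2" using k1_def k2_def es_def by simp
  have hv1: "hd vs1 = vs1!0" and hv2: "hd vs2 = vs2!0"
    using path_hd[OF p1] path_hd[OF p2] by auto
  have lv1: "last vs1 = vs1!k1" and lv2: "last vs2 = vs2!k2"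
    using path_last[OF p1] path_last[OF p2] k1_def k2_def by auto
  have vsA: "\<And>i. i < k1 \<Longrightarrow> vs!i = vs1!i"
    unfolding vs_def using L1 by (simp add: nth_append nth_butlast)
  have vsB: "\<And>i. i < k2 \<Longrightarrow> vs!(k1+i) = vs2!i"
    unfolding vs_def using L1 L2 by (simp add: nth_append nth_butlast)
  have esA: "\<And>i. i < k1 \<Longrightarrow> es!i = es1!i" unfolding es_def k1_def by (simp add: nth_append)
  have esB: "\<And>i. i < k2 \<Longrightarrow> es!(k1+i) = es2!i" unfolding es_def k1_def by (simp add: nth_append)
  have "ends (es!i) = {vs!i, vs!(Suc i mod length es)}"
  proof (cases "i < k1")
    case True
    have "vs!Suc i = vs1!Suc i"
    proof (cases "Suc i < k1")
      case False
      then have "Suc i = k1" using True by simp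
      then show ?thesis using vsB[of 0] k2p lv1 l1 hv2 by simp
    qed (use vsA in simp)
    moreover have "Suc i < length es" using True k2p len by simp
    ultimately show ?thesis
      using esA[OF True] path_nth_edge[OF p1, of i] True k1_def vsA[OF True] by simp
  next
    case False
    define j where "j = i - k1"
    have ij: "i = k1 + j" "j < k2" using False i len j_def es_def by auto
    have e2: "ends (es!i) = {vs2!j, vs2!Suc j}"
      using esB[OF ij(2)] path_nth_edge[OF p2, of j] ij k2_def by simp
    show ?thesis
    proof (cases "Suc j < k2")
      case True
      then show ?thesis using e2 vsB[OF ij(2)] vsB[OF True] ij len by simp
    next
      case False
      then have "Suc j = k2" using ij by simp
      moreover have "vs!0 = vs1!0" using vsA k1p by simp
      ultimately show ?thesis
        using e2 vsB[OF ij(2)] ij len lv2 l2 hv1 Suc_mod_less[OF i[folded es_def]] by simp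
    qed
  qed
  then show ?thesis unfolding vs_def es_def .
qed

lemma cycle_of_two_paths:
  assumes p1: "path F1 vs1 es1" and p2: "path F2 vs2 es2" and s1: "F1 \<subseteq> E" and s2: "F2 \<subseteq> E"
    and n1: "es1 \<noteq> []" and n2: "es2 \<noteq> []" and l1: "last vs1 = hd vs2" and l2: "last vs2 = hd vs1"
    and dj: "set (butlast vs1) \<inter> set (butlast vs2) = {}" and dje: "set es1 \<inter> set es2 = {}"
  shows "cycle (butlast vs1 @ butlast vs2) (es1 @ es2)"
proof -
  have "length (butlast vs1 @ butlast vs2) = length (es1 @ es2)"
    using path_length[OF p1] path_length[OF p2] by simp
  moreover have "2 \<le> length (es1 @ es2)" using n1 n2 by (cases es1; cases es2) auto
  moreover have "distinct (butlast vs1 @ butlast vs2)"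
    using path_distinct[OF p1] path_distinct[OF p2] dj by (simp add: distinct_butlast)
  moreover have "distinct (es1 @ es2)"
    using path_distinct_edges[OF p1] path_distinct_edges[OF p2] dje by simp
  moreover have "set (es1 @ es2) \<subseteq> E" using path_edges[OF p1] path_edges[OF p2] s1 s2 by auto
  ultimately show ?thesis
    unfolding cycle_def using ends_of_two_paths[OF p1 p2 n1 n2 l1 l2] by blast
qed

lemma circle_of_two_paths:
  assumes "path F1 vs1 es1" "path F2 vs2 es2" "F1 \<subseteq> E" "F2 \<subseteq> E" "es1 \<noteq> []" "es2 \<noteq> []"
    "last vs1 = hd vs2" "last vs2 = hd vs1"
    "set (butlast vs1) \<inter> set (butlast vs2) = {}" "set es1 \<inter> set es2 = {}"
  shows "circle E ends (set es1 \<union> set es2)"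
  using circle_of_cycle[OF cycle_of_two_paths[OF assms]] by simp

lemma path_of_rtrancl_avoiding:
  assumes r: "(a, b) \<in> {(x, y). (x, y) \<in> adj ends F \<and> x \<notin> U}\<^sup>*" and FE: "F \<subseteq> E"
  shows "\<exists>vs es. path F vs es \<and> hd vs = a \<and> last vs = b \<and> (\<forall>v\<in>set (butlast vs). v \<notin> U)"
  using r
proof (induction rule: converse_rtrancl_induct)
  case base
  show ?case by (rule exI[of _ "[b]"], rule exI[of _ "[]"]) (simp add: path_singleton)
next
  case (step x x')
  then obtain vs es where P: "path F vs es" "hd vs = x'" "last vs = b" "\<forall>v\<in>set (butlast vs). v \<notin> U"
    by blast
  from step(1) obtain f where f: "f \<in> F" "x \<in> ends f" "x' \<in> ends f" and xU: "x \<notin> U"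
    unfolding adj_def by blast
  have ne: "vs \<noteq> []" using path_length[OF P(1)] by auto
  show ?case
  proof (cases "x \<in> set vs")
    case True
    then obtain j where j: "j < length vs" "vs!j = x" by (auto simp: in_set_conv_nth)
    have "path F (drop j vs) (drop j es)" using path_drop[OF P(1) j(1)] .
    moreover have "hd (drop j vs) = x" using j by (simp add: hd_drop_conv_nth)
    moreover have "last (drop j vs) = b" using j P(3) by simp
    moreover have "\<forall>v\<in>set (butlast (drop j vs)). v \<notin> U"
      using P(4) by (metis butlast_drop in_set_dropD)
    ultimately show ?thesis by blast
  next
    case False
    have "x \<noteq> x'" using False P(2) ne by auto
    moreover obtain y where "y \<noteq> x" "ends f = {x, y}" using ends_eq_pair f FE by blast
    ultimately have "ends f = {x, hd vs}" using f(3) P(2) by auto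
    then have "path F (x#vs) (f#es)" using path_Cons[OF P(1) f(1)] False by simp
    moreover have "\<forall>v\<in>set (butlast (x#vs)). v \<notin> U" using P(4) ne xU by simp
    ultimately show ?thesis using P(3) ne by (intro exI[of _ "x#vs"] exI[of _ "f#es"]) simp
  qed
qed

lemma path_of_rtrancl:
  assumes "(a, b) \<in> (adj ends F)\<^sup>*" "F \<subseteq> E"
  shows "\<exists>vs es. path F vs es \<and> hd vs = a \<and> last vs = b"
  using path_of_rtrancl_avoiding[of a b F "{}"] assms by auto

lemma exists_longest_path:
  assumes SE: "S \<subseteq> E" and ne: "S \<noteq> {}"
  obtains vs es where "path S vs es" "set vs \<subseteq> verts ends S"
    "\<And>ws fs. path S ws fs \<Longrightarrow> set ws \<subseteq> verts ends S \<Longrightarrow> length ws \<le> length vs"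
proof -
  define P where "P k = (\<exists>vs es. path S vs es \<and> set vs \<subseteq> verts ends S \<and> length vs = k)" for k
  obtain f0 v0 where "f0 \<in> S" "v0 \<in> ends f0" using ne ends_nonempty SE by blast
  then have "v0 \<in> verts ends S" unfolding verts_def by blast
  then have P1: "P 1" unfolding P_def by (intro exI[of _ "[v0]"] exI[of _ "[]"]) (simp add: path_singleton)
  have bound: "\<forall>k. P k \<longrightarrow> k \<le> card (verts ends S)"
  proof (intro allI impI)
    fix k assume "P k"
    then obtain vs es where p: "path S vs es" "set vs \<subseteq> verts ends S" "length vs = k"
      unfolding P_def by blast
    then have "length vs = card (set vs)" by (simp add: distinct_card path_distinct)
    then show "k \<le> card (verts ends S)" using card_mono[OF finite_verts[OF SE] p(2)] p(3) by simp
  qed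
  obtain k where "P k" and kmax: "\<forall>y. P y \<longrightarrow> y \<le> k"
    using Nat.ex_has_greatest_nat[OF P1 bound] by blast
  then obtain vs es where "path S vs es" "set vs \<subseteq> verts ends S" "length vs = k"
    unfolding P_def by blast
  moreover have "length ws \<le> k" if "path S ws fs" "set ws \<subseteq> verts ends S" for ws fs
    using kmax that unfolding P_def by blast
  ultimately show ?thesis using that by blast
qed

lemma circle_of_path_and_edge:
  assumes p: "path S vs es" and SE: "S \<subseteq> E" and g: "g \<in> S" "ends g = {vs!j, vs!0}"
    and j: "0 < j" "j < length vs" and gn: "g \<notin> set (take j es)"
  shows "circle E ends (set (take j es) \<union> {g})"
proof -
  have L: "length vs = Suc (length es)" using path_length[OF p] .
  have "vs!j \<noteq> vs!0" using path_distinct[OF p] j by (subst nth_eq_iff_index_eq) auto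
  then have p2: "path S [vs!j, vs!0] [g]"
    using path_Cons[OF path_singleton g(1)] g(2) by simp
  have "vs!j \<notin> set (take j vs)"
    using path_distinct[OF p] j by (auto simp: in_set_conv_nth nth_eq_iff_index_eq)
  moreover have "butlast (take (Suc j) vs) = take j vs"
    using j by (simp add: take_Suc_conv_app_nth)
  ultimately have "set (butlast (take (Suc j) vs)) \<inter> set (butlast [vs!j, vs!0]) = {}" by simp
  moreover have "take j es \<noteq> []" using j L by (cases es) auto
  moreover have "last (take (Suc j) vs) = hd [vs!j, vs!0]" using j by (simp add: take_Suc_conv_app_nth)
  moreover have "last [vs!j, vs!0] = hd (take (Suc j) vs)" using path_hd[OF p] by simp
  ultimately show ?thesis
    using circle_of_two_paths[OF path_take[OF p j(2)] p2 SE SE] gn by simp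
qed

text \<open>A longest path cannot be extended at its first vertex, so a second edge there
  must lead back into the path and close a circle.\<close>
lemma circle_in_min_degree_two:
  assumes SE: "S \<subseteq> E" and ne: "S \<noteq> {}" and md: "\<forall>v \<in> verts ends S. degree S v \<ge> 2"
  shows "\<exists>Y. circle E ends Y \<and> Y \<subseteq> S"
proof -
  obtain vs es where p: "path S vs es" and sv: "set vs \<subseteq> verts ends S"
    and longest: "\<And>ws fs. path S ws fs \<Longrightarrow> set ws \<subseteq> verts ends S \<Longrightarrow> length ws \<le> length vs"
    using exists_longest_path[OF SE ne] by blast
  have L: "length vs = Suc (length es)" using path_length[OF p] .
  define v where "v = vs!0"
  have hdv: "hd vs = v" using path_hd[OF p] v_def by simp
  have vin: "v \<in> verts ends S" using sv L unfolding v_def by auto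
  have "2 \<le> card {g\<in>S. v \<in> ends g}" using md vin by (simp add: degree_def)
  moreover have "finite {g\<in>S. v \<in> ends g}" using SE finite_edges by (auto intro: finite_subset)
  ultimately have "\<not> (\<forall>a\<in>{g\<in>S. v \<in> ends g}. \<forall>b\<in>{g\<in>S. v \<in> ends g}. a = b)"
    using card_le_Suc0_iff_eq by fastforce
  then obtain g where g: "g \<in> S" "v \<in> ends g" and gne: "g \<noteq> es!0" by blast
  obtain w where w: "w \<noteq> v" "ends g = {v, w}" using ends_eq_pair g SE by blast
  have "w \<in> set vs"
  proof (rule ccontr)
    assume "w \<notin> set vs"
    then have "path S (w#vs) (g#es)" using path_Cons[OF p g(1)] w hdv by (simp add: insert_commute)
    moreover have "set (w#vs) \<subseteq> verts ends S" using sv w g unfolding verts_def by auto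
    ultimately show False using longest[of "w#vs" "g#es"] by simp
  qed
  then obtain j where j: "j < length vs" "vs!j = w" by (auto simp: in_set_conv_nth)
  have j0: "0 < j" using j w v_def by (metis gr0I)
  have "g \<notin> set (take j es)"
  proof
    assume "g \<in> set (take j es)"
    then obtain i where i: "i < j" "i < length es" "es!i = g" by (auto simp: in_set_conv_nth)
    then have "v = vs!i \<or> v = vs!Suc i" using path_nth_edge[OF p] g(2) by auto
    moreover have "i < length vs" "Suc i < length vs" "0 < length vs" using i L by auto
    ultimately have "i = 0"
      using v_def by (auto simp: nth_eq_iff_index_eq[OF path_distinct[OF p]])
    then show False using gne i by simp
  qed
  moreover have "ends g = {vs!j, vs!0}" using w j v_def by auto
  ultimately have "circle E ends (set (take j es) \<union> {g})"
    using circle_of_path_and_edge[OF p SE g(1) _ j0 j(1)] by blast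
  moreover have "set (take j es) \<union> {g} \<subseteq> S" using path_edges[OF p] g(1) by (auto dest: in_set_takeD)
  ultimately show ?thesis by blast
qed

lemma even_subgraph_circle_through:
  assumes "finite S" "S \<subseteq> E" "even_subgraph S" "e \<in> S"
  shows "\<exists>W. circle E ends W \<and> W \<subseteq> S \<and> e \<in> W"
  using assms
proof (induction "card S" arbitrary: S rule: less_induct)
  case less
  have "degree S v \<ge> 2" if "v \<in> verts ends S" for v
  proof -
    have "{f\<in>S. v \<in> ends f} \<noteq> {}" using that unfolding verts_def by blast
    then have "degree S v \<noteq> 0" unfolding degree_def using less.prems(1) by simp
    moreover have "even (degree S v)" using less.prems(3) unfolding even_subgraph_def by blast
    ultimately show ?thesis by (auto elim: evenE)
  qed
  then obtain Y where Y: "circle E ends Y" "Y \<subseteq> S"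
    using circle_in_min_degree_two[OF less.prems(2)] less.prems(4) by blast
  show ?case
  proof (cases "e \<in> Y")
    case False
    have "Y \<noteq> {}" using Y(1) unfolding circle_def by blast
    then have "card (S - Y) < card S" using Y(2) less.prems(1) by (intro psubset_card_mono) auto
    moreover have "even_subgraph (S - Y)"
      using even_subgraph_sym_diff[OF less.prems(1) circle_finite[OF Y(1)] less.prems(3)
          circle_even_subgraph[OF Y(1)]] Y(2) by (simp add: Diff_eq_empty_iff[THEN iffD2])
    ultimately show ?thesis
      using less.hyps[of "S - Y"] less.prems False by blast
  qed (use Y in blast)
qed

lemma circle_subset_circle_eq:
  assumes K: "circle E ends K" and Z: "circle E ends Z" and sub: "K \<subseteq> Z"
  shows "K = Z"
proof -
  have ZE: "Z \<subseteq> E" using Z unfolding circle_def by auto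
  have local: "f \<in> K" if v: "v \<in> verts ends K" and f: "f \<in> Z" "v \<in> ends f" for v f
  proof -
    have "v \<in> verts ends Z" using v sub unfolding verts_def by blast
    then have "card {f\<in>K. v \<in> ends f} = card {f\<in>Z. v \<in> ends f}"
      using circle_degree[OF K v] circle_degree[OF Z] unfolding degree_def by simp
    then have "{f\<in>K. v \<in> ends f} = {f\<in>Z. v \<in> ends f}"
      using sub circle_finite[OF Z] by (intro card_subset_eq) auto
    then show "f \<in> K" using f by blast
  qed
  obtain u where u: "u \<in> verts ends K" using K unfolding circle_def connected_on_def by blast
  have "verts ends Z \<subseteq> verts ends K"
  proof
    fix z assume "z \<in> verts ends Z"
    moreover have "u \<in> verts ends Z" using u sub unfolding verts_def by blast
    ultimately have "(u, z) \<in> (adj ends Z)\<^sup>*" using Z unfolding circle_def connected_on_def by blast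
    then show "z \<in> verts ends K"
    proof (induction rule: rtrancl_induct)
      case (step y z)
      then obtain f where "f \<in> Z" "y \<in> ends f" "z \<in> ends f" unfolding adj_def by blast
      then show ?case using local step.IH unfolding verts_def by blast
    qed (use u in simp)
  qed
  have "Z \<subseteq> K"
  proof
    fix f assume f: "f \<in> Z"
    then obtain v where v: "v \<in> ends f" using ends_nonempty ZE by blast
    then have "v \<in> verts ends K" using \<open>verts ends Z \<subseteq> verts ends K\<close> f unfolding verts_def by blast
    then show "f \<in> K" using local f v by blast
  qed
  then show ?thesis using sub by blast
qed

text \<open>Induction on the size of Z \<union> K: the even subgraph sym_diff Z K contains a circle W
  through e, and unless sym_diff Z W = K already, W replaces Z with a smaller union.\<close>
lemma circle_sym_diff_through:
  assumes K: "circle E ends K" and eK: "e \<notin> K" and Z: "circle E ends Z" and eZ: "e \<in> Z"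
    and ZK: "Z \<inter> K \<noteq> {}"
  shows "\<exists>W1 W2. circle E ends W1 \<and> circle E ends W2 \<and> e \<in> W1 \<and> e \<in> W2 \<and> sym_diff W1 W2 = K"
  using Z eZ ZK
proof (induction "card (Z \<union> K)" arbitrary: Z rule: less_induct)
  case less
  have fZ: "finite Z" and fK: "finite K" using circle_finite less.prems(1) K by auto
  define S where "S = sym_diff Z K"
  have fS: "finite S" using fZ fK S_def by simp
  have SE: "S \<subseteq> E" using less.prems(1) K unfolding circle_def S_def by blast
  have evS: "even_subgraph S" unfolding S_def
    by (rule even_subgraph_sym_diff[OF fZ fK circle_even_subgraph[OF less.prems(1)] circle_even_subgraph[OF K]])
  have "e \<in> S" using less.prems(2) eK S_def by blast
  then obtain W where W: "circle E ends W" "W \<subseteq> S" "e \<in> W"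
    using even_subgraph_circle_through[OF fS SE evS] by blast
  show ?case
  proof (cases "W = S")
    case True
    then have "sym_diff Z W = K" using S_def by blast
    then show ?thesis using less.prems(1,2) W by blast
  next
    case False
    have WK: "W \<inter> K \<noteq> {}"
    proof
      assume "W \<inter> K = {}"
      then have "W = Z" using circle_subset_circle_eq[OF W(1) less.prems(1)] W(2) S_def by blast
      then show False using less.prems(3) W(2) S_def by blast
    qed
    have "W \<union> K \<noteq> Z \<union> K"
    proof
      assume eq: "W \<union> K = Z \<union> K"
      have TK: "S - W \<subseteq> K - Z" using eq S_def by blast
      obtain t where t: "t \<in> S - W" using False W(2) by blast
      have "even_subgraph (S - W)"
        using even_subgraph_sym_diff[OF fS circle_finite[OF W(1)] evS circle_even_subgraph[OF W(1)]] W(2)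
        by (simp add: Diff_eq_empty_iff[THEN iffD2])
      then obtain Y where Y: "circle E ends Y" "Y \<subseteq> S - W" "t \<in> Y"
        using even_subgraph_circle_through[OF _ _ _ t] fS SE by blast
      then have "Y = K" using circle_subset_circle_eq[OF Y(1) K] TK by blast
      then show False using TK Y(2) less.prems(3) by blast
    qed
    then have "card (W \<union> K) < card (Z \<union> K)"
      using W(2) fZ fK S_def by (intro psubset_card_mono) auto
    then show ?thesis using less.hyps[OF _ W(1) W(3) WK] by blast
  qed
qed

lemma circle_through_trans:
  assumes Z: "circle E ends Z" "a \<in> Z" "g \<in> Z" and K: "circle E ends K" "g \<in> K" "h \<in> K"
  shows "\<exists>W. circle E ends W \<and> a \<in> W \<and> h \<in> W"
proof (cases "a \<in> K")
  case False
  have "Z \<inter> K \<noteq> {}" using Z K by blast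
  then obtain W1 W2 where "circle E ends W1" "circle E ends W2" "a \<in> W1" "a \<in> W2" "sym_diff W1 W2 = K"
    using circle_sym_diff_through[OF K(1) False Z(1) Z(2)] by blast
  then show ?thesis using K(3) by blast
qed (use K in blast)

lemma exists_ear:
  assumes B: "is_block V E ends" and vE: "verts ends E \<subseteq> V"
    and FE: "F \<subseteq> E" and Fne: "F \<noteq> {}" and FE': "F \<noteq> E"
  obtains p q vs es where "p \<in> verts ends F" "q \<in> verts ends F" "p \<noteq> q"
    "path (E - F) vs es" "hd vs = p" "last vs = q" "es \<noteq> []"
    "\<forall>v\<in>set (butlast vs). v = p \<or> v \<notin> verts ends F"
proof -
  define U where "U = verts ends F"
  obtain p where pU: "p \<in> U" and "p \<in> verts ends (E - F)"
    using connected_edge_partition_common_vertex[of ends V E F "E - F"] B vE ends_nonempty FE Fne FE'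
    unfolding is_block_def U_def by blast
  then obtain f0 where f0: "f0 \<in> E - F" "p \<in> ends f0" unfolding verts_def by blast
  obtain x0 where x0: "x0 \<noteq> p" "ends f0 = {p, x0}" using ends_eq_pair f0 by blast
  have p0: "path (E - F) [p, x0] [f0]"
    using path_Cons[OF path_singleton, of f0 "E - F" p x0] f0(1) x0 by simp
  show ?thesis
  proof (cases "x0 \<in> U")
    case True
    then show ?thesis using that[OF pU[unfolded U_def] _ x0(1)[symmetric] p0] by (simp add: U_def)
  next
    case False
    define R where "R = {(x, y). (x, y) \<in> adj ends (E - F) \<and> x \<notin> U}"
    obtain q where q: "(x0, q) \<in> R\<^sup>*" "q \<in> U" "q \<noteq> p"
      using cutpoint_if_no_return[OF FE Fne f0(1) x0(2) pU[unfolded U_def] False[unfolded U_def]] B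
      unfolding is_block_def R_def U_def by blast
    obtain vs es where P: "path (E - F) vs es" "hd vs = x0" "last vs = q" "\<forall>v\<in>set (butlast vs). v \<notin> U"
      using path_of_rtrancl_avoiding[OF q(1)[unfolded R_def]] by blast
    have vne: "vs \<noteq> []" using path_length[OF P(1)] by auto
    then have "set vs = insert q (set (butlast vs))"
      using P(3) by (metis append_butlast_last_id list.simps(15) rotate1.simps(2) set_rotate1)
    then have "p \<notin> set vs" using P(4) pU q(3) by auto
    then have "path (E - F) (p#vs) (f0#es)" using path_Cons[OF P(1) f0(1)] x0 P(2) by simp
    moreover have "\<forall>v\<in>set (butlast (p#vs)). v = p \<or> v \<notin> U" using P(4) vne by simp
    ultimately show ?thesis using that[of p q "p#vs" "f0#es"] pU q(2,3) P(3) vne unfolding U_def by simp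
  qed
qed

lemma circle_of_ear:
  assumes R: "path (E - F) rvs res" "hd rvs = p" "last rvs = q" "res \<noteq> []"
      "\<forall>v\<in>set (butlast rvs). v = p \<or> v \<notin> verts ends F"
    and Z: "circle E ends Z" "Z \<subseteq> F" and pq: "p \<in> verts ends Z" "q \<in> verts ends Z" "q \<noteq> p"
  obtains Y where "circle E ends Y" "Y \<inter> F \<noteq> {}" "\<not> Y \<subseteq> F"
proof -
  have ZE: "Z \<subseteq> E" using Z(1) unfolding circle_def by blast
  have "(q, p) \<in> (adj ends Z)\<^sup>*" using Z(1) pq unfolding circle_def connected_on_def by blast
  then obtain avs aes where A: "path Z avs aes" "hd avs = q" "last avs = p"
    using path_of_rtrancl ZE by blast
  have avne: "avs \<noteq> []" using path_length[OF A(1)] by auto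
  have ane: "aes \<noteq> []"
  proof
    assume "aes = []"
    then have "avs = [q]" using path_length[OF A(1)] A(2) by (cases avs) auto
    then show False using A(3) pq(3) by simp
  qed
  have "set (butlast avs) \<subseteq> verts ends F"
    using path_verts[OF A(1) ane] Z(2) unfolding verts_def by (blast dest: in_set_butlastD)
  moreover have "p \<notin> set (butlast avs)"
    using path_distinct[OF A(1)] avne A(3)
    by (metis append_butlast_last_id distinct_append disjoint_iff list.set_intros(1))
  ultimately have "set (butlast rvs) \<inter> set (butlast avs) = {}" using R(5) by auto
  moreover have "set res \<inter> set aes = {}" using path_edges[OF R(1)] path_edges[OF A(1)] Z(2) by blast
  ultimately have "circle E ends (set res \<union> set aes)"
    using R(2,3) A(2,3) by (intro circle_of_two_paths[OF R(1) A(1) _ ZE R(4) ane]) auto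
  moreover have "(set res \<union> set aes) \<inter> F \<noteq> {}"
    using ane path_edges[OF A(1)] Z(2) by (cases aes) auto
  moreover have "\<not> set res \<union> set aes \<subseteq> F" using path_edges[OF R(1)] R(4) by (cases res) auto
  ultimately show ?thesis using that by blast
qed

text \<open>The edges lying on a common circle with e form a set F closed under circles meeting it.
  If F missed an edge, an ear of F, closed up by a path inside a circle of F, would be a circle
  meeting F but not contained in it.\<close>
lemma block_common_circle:
  assumes B: "is_block V E ends" and vE: "verts ends E \<subseteq> V"
    and C: "circle E ends C" and eC: "e \<in> C" and f: "f \<in> E"
  shows "\<exists>Z. circle E ends Z \<and> e \<in> Z \<and> f \<in> Z"
proof (rule ccontr)
  assume nf: "\<not> ?thesis"
  define F where "F = {g\<in>E. \<exists>Z. circle E ends Z \<and> e \<in> Z \<and> g \<in> Z}"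
  have closed: "Z \<subseteq> F" if Z: "circle E ends Z" and ZF: "Z \<inter> F \<noteq> {}" for Z
  proof
    fix z assume z: "z \<in> Z"
    obtain g Zg where "g \<in> Z" "circle E ends Zg" "e \<in> Zg" "g \<in> Zg" using ZF unfolding F_def by blast
    then obtain W where "circle E ends W" "e \<in> W" "z \<in> W" using circle_through_trans Z z by blast
    moreover have "z \<in> E" using Z z unfolding circle_def by blast
    ultimately show "z \<in> F" unfolding F_def by blast
  qed
  have FE: "F \<subseteq> E" unfolding F_def by blast
  have Fne: "F \<noteq> {}" using C eC unfolding F_def circle_def by blast
  have "F \<noteq> E" using nf f unfolding F_def by blast
  then obtain p q rvs res where pq: "p \<in> verts ends F" "q \<in> verts ends F" "q \<noteq> p"
    and R: "path (E - F) rvs res" "hd rvs = p" "last rvs = q" "res \<noteq> []"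
      "\<forall>v\<in>set (butlast rvs). v = p \<or> v \<notin> verts ends F"
    using exists_ear[OF B vE FE Fne] by metis
  obtain fp fq where fp: "fp \<in> F" "p \<in> ends fp" and fq: "fq \<in> F" "q \<in> ends fq"
    using pq unfolding verts_def by blast
  obtain Zp where Zp: "circle E ends Zp" "fp \<in> Zp" "e \<in> Zp" using fp F_def by blast
  obtain Zq where Zq: "circle E ends Zq" "e \<in> Zq" "fq \<in> Zq" using fq F_def by blast
  obtain Z where Z: "circle E ends Z" "fp \<in> Z" "fq \<in> Z"
    using circle_through_trans[OF Zp Zq] by blast
  have "Z \<subseteq> F" using closed[OF Z(1)] Z(2) fp(1) by blast
  moreover have "p \<in> verts ends Z" "q \<in> verts ends Z" using Z fp fq unfolding verts_def by blast+
  ultimately obtain Y where "circle E ends Y" "Y \<inter> F \<noteq> {}" "\<not> Y \<subseteq> F"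
    using circle_of_ear[OF R Z(1)] pq(3) by blast
  then show False using closed by blast
qed
lemma not_circle_singleton: "\<not> circle E ends {f}"
proof
  assume f: "circle E ends {f}"
  then obtain v where "v \<in> ends f" using ends_nonempty unfolding circle_def by blast
  moreover from this have "{g\<in>{f}. v \<in> ends g} = {f}" by auto
  ultimately have "v \<in> verts ends {f}" "degree {f} v = 1" unfolding verts_def degree_def by simp_all
  then show False using circle_degree[OF f] by simp
qed

lemma bridge_circle_disjoint:
  assumes D: "D \<in> bridges V E ends C" and N: "circle E ends N" "N \<subseteq> D"
  shows "N \<inter> C = {}"
proof (cases "D \<in> {{f} | f. chord E ends C f}")
  case True
  then obtain f where "D = {f}" by blast
  then have "N = {f}" using N unfolding circle_def by blast
  then show ?thesis using not_circle_singleton N(1) by blast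
next
  case False
  then obtain X where "X \<in> comps_minus V E ends C" and DX: "D = bridge_of_comp E ends C X"
    using D unfolding bridges_def by blast
  then have "X \<inter> verts ends C = {}" unfolding comps_minus_def Let_def by auto
  then have "g \<notin> C" if "g \<in> D" for g
    using that ends_nonempty unfolding DX bridge_of_comp_def verts_def by blast
  then show ?thesis using N(2) by blast
qed

lemma battery_disjoint_circle_positive:
  assumes B: "is_block V E ends" "verts ends E \<subseteq> V" and bat: "pos_battery E ends \<sigma> e C"
    and N: "circle E ends N" and NC: "N \<inter> C = {}"
  shows "positive \<sigma> N"
proof (rule ccontr)
  assume npos: "\<not> positive \<sigma> N"
  have C: "circle E ends C" "e \<in> C"
    and uniq: "\<And>C'. circle E ends C' \<Longrightarrow> e \<in> C' \<Longrightarrow> positive \<sigma> C' \<Longrightarrow> C' = C"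
    using bat unfolding pos_battery_def by auto
  obtain f where f: "f \<in> N" and "f \<in> E" using N unfolding circle_def by blast
  then obtain Z where Z: "circle E ends Z" "e \<in> Z" "f \<in> Z"
    using block_common_circle[OF B C] by blast
  have "e \<notin> N" "Z \<inter> N \<noteq> {}" using NC C(2) Z(3) f by auto
  then obtain W1 W2 where W: "circle E ends W1" "circle E ends W2" "e \<in> W1" "e \<in> W2"
    and N_eq: "sym_diff W1 W2 = N"
    using circle_sym_diff_through[OF N _ Z(1,2)] by blast
  have "positive \<sigma> W1 \<or> positive \<sigma> W2"
    using positive_sym_diff_iff[OF circle_finite[OF W(1)] circle_finite[OF W(2)], of \<sigma>] npos N_eq by auto
  then have "W1 = C \<or> W2 = C" using uniq W by blast
  then have "C \<subseteq> W1 \<and> C \<subseteq> W2" using N_eq NC by blast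
  then have "W1 = W2" using circle_subset_circle_eq C(1) W(1,2) by metis
  then show False using N_eq N unfolding circle_def by blast
qed

end
theorem mainTheorem5:
  fixes V :: "'v set" and E :: "'e set" and ends :: "'e \<Rightarrow> 'v set"
    and \<sigma> :: "'e \<Rightarrow> sgn" and e :: 'e and C :: "'e set"
  assumes "graph V E ends"
    and "is_block V E ends"
    and "card E \<noteq> 1"
    and "\<not> circle E ends E"
    and "pos_battery E ends \<sigma> e C"
  shows "\<forall>D\<in>bridges V E ends C. balanced E ends \<sigma> D"
proof -
  interpret loopless_graph E ends
  proof
    show "finite E" using assms(1) unfolding graph_def by simp
  qed (rule block_loopless[OF assms(1-3)])
  have vE: "verts ends E \<subseteq> V" using assms(1) unfolding graph_def verts_def by auto
  show ?thesis
    unfolding balanced_def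
  proof (intro ballI allI impI)
    fix D N assume "D \<in> bridges V E ends C" and N: "circle E ends N \<and> N \<subseteq> D"
    then have "N \<inter> C = {}" using bridge_circle_disjoint by blast
    then show "positive \<sigma> N"
      using battery_disjoint_circle_positive[OF assms(2) vE assms(5)] N by blast
  qed
qed
end
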